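(* Let $F=\{\mathbf{p}_0,\ldots,\mathbf{p}_n\}\subset\mathbb{R}^d$ be not contained in any $(d-1)$-dimensional affine subspace, let $\mathcal{D}=\{0,\ldots,n\}$, let $\lambda_i\in(0,1)$ for $i\in\mathcal{D}$, and let $S_i(\mathbf{x})=\lambda_i\mathbf{x}+(1-\lambda_i)\mathbf{p}_i$. Suppose $$\min_{A\subseteq\mathcal{D},\ \#A=d+1}\ \sum_{i\in A}\lambda_i\ \ge\ d.$$ Then the unique non-empty compact set $X$ with $X=\bigcup_{i\in\mathcal{D}}S_i(X)$ equals $\mathrm{conv}(F)$.
   Context: $\mathrm{conv}(F)$ denotes the convex hull of $F$. *)

theory Defs
  imports "HOL-Analysis.Analysis"
begin

end

theory Submission
  imports Defs
begin

text \<open>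
  A nonempty compact set \<open>X = \<Union>\<^sub>i S\<^sub>i X\<close> of a family of contractions lies in every nonempty
  closed set \<open>Y\<close> mapped into itself by all \<open>S\<^sub>i\<close>: the point of \<open>X\<close> farthest from \<open>Y\<close> is the
  image \<open>S\<^sub>i y\<close> of a point \<open>y \<in> X\<close>, so its distance to \<open>Y\<close> is at most \<open>\<lambda>\<^sub>i\<close> times that of
  \<open>y\<close>, hence at most \<open>\<lambda>\<^sub>i\<close> times its own, hence zero.
  Hence \<open>X\<close> is unique, and it suffices to show \<open>conv F = \<Union>\<^sub>i S\<^sub>i (conv F)\<close>.
  Each \<open>S\<^sub>i\<close> maps \<open>conv F\<close> into itself. Conversely, by Caratheodory (the spanning hypothesis
  guarantees \<open>d + 1\<close> distinct points) every \<open>x \<in> conv F\<close> is \<open>\<Sum>\<^sub>i\<^sub>\<in>\<^sub>A \<mu>\<^sub>i p\<^sub>i\<close> with \<open>#A = d + 1\<close>.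
  The hypothesis says \<open>\<Sum>\<^sub>i\<^sub>\<in>\<^sub>A (1 - \<lambda>\<^sub>i) \<le> 1 = \<Sum>\<^sub>i\<^sub>\<in>\<^sub>A \<mu>\<^sub>i\<close>, so \<open>\<mu>\<^sub>j \<ge> 1 - \<lambda>\<^sub>j\<close> for some \<open>j\<close>, and
  removing the mass \<open>1 - \<lambda>\<^sub>j\<close> from \<open>p\<^sub>j\<close> exhibits \<open>x\<close> as \<open>S\<^sub>j y\<close> with \<open>y \<in> conv F\<close>.
\<close>

lemma self_similar_subset_of_invariant:
  fixes X Y :: "'a::metric_space set" and S :: "'i \<Rightarrow> 'a \<Rightarrow> 'a"
  assumes X: "compact X" "X \<subseteq> (\<Union>i\<in>I. S i ` X)"
    and Y: "closed Y" "Y \<noteq> {}" "\<And>i. i \<in> I \<Longrightarrow> S i ` Y \<subseteq> Y"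
    and contraction: "\<And>i x y. i \<in> I \<Longrightarrow> dist (S i x) (S i y) \<le> lam i * dist x y"
    and lam: "\<And>i. i \<in> I \<Longrightarrow> 0 \<le> lam i \<and> lam i < 1"
  shows "X \<subseteq> Y"
proof (cases "X = {}")
  case False
  have "compact ((\<lambda>x. infdist x Y) ` X)"
    using X(1) by (intro compact_continuous_image continuous_intros)
  then obtain x0 where x0: "x0 \<in> X" and farthest: "\<And>x. x \<in> X \<Longrightarrow> infdist x Y \<le> infdist x0 Y"
    using compact_attains_sup[of "(\<lambda>x. infdist x Y) ` X"] False by auto
  obtain i y where i: "i \<in> I" and y: "y \<in> X" and x0_eq: "x0 = S i y"
    using x0 X(2) by blast
  have "infdist x0 Y \<le> lam i * infdist y Y"
  proof (cases "lam i = 0")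
    case True
    obtain k where "k \<in> Y" using Y(2) by blast
    then show ?thesis
      using infdist_le2[of "S i k" Y x0] contraction[OF i, of y k] Y(3)[OF i] True x0_eq by auto
  next
    case False
    then have pos: "0 < lam i" using lam[OF i] by simp
    have "infdist x0 Y / lam i \<le> dist y k" if "k \<in> Y" for k
      using infdist_le[of "S i k" Y x0] contraction[OF i, of y k] Y(3)[OF i] that x0_eq pos
      by (auto simp: divide_le_eq mult.commute)
    then have "infdist x0 Y / lam i \<le> infdist y Y"
      unfolding infdist_notempty[OF Y(2)] by (intro cINF_greatest Y(2))
    then show ?thesis using pos by (simp add: divide_le_eq mult.commute)
  qed
  also have "\<dots> \<le> lam i * infdist x0 Y"
    using farthest[OF y] lam[OF i] by (simp add: mult_left_mono)
  finally have "infdist x0 Y = 0"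
    using lam[OF i] infdist_nonneg[of x0 Y] by (simp add: mult_le_cancel_right1)
  then have "infdist x Y = 0" if "x \<in> X" for x
    using farthest[OF that] infdist_nonneg[of x Y] by simp
  then show ?thesis using in_closed_iff_infdist_zero[OF Y(1,2)] by blast
qed simp

corollary self_similar_set_unique:
  fixes X Y :: "'a::metric_space set" and S :: "'i \<Rightarrow> 'a \<Rightarrow> 'a"
  assumes "compact X" "X \<noteq> {}" "X = (\<Union>i\<in>I. S i ` X)"
    and "compact Y" "Y \<noteq> {}" "Y = (\<Union>i\<in>I. S i ` Y)"
    and "\<And>i x y. i \<in> I \<Longrightarrow> dist (S i x) (S i y) \<le> lam i * dist x y"
    and "\<And>i. i \<in> I \<Longrightarrow> 0 \<le> lam i \<and> lam i < 1"
  shows "X = Y"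
proof
  show "X \<subseteq> Y"
    by (rule self_similar_subset_of_invariant[where X=X and Y=Y and I=I and S=S and lam=lam])
      (use assms in \<open>blast intro: compact_imp_closed\<close>)+
  show "Y \<subseteq> X"
    by (rule self_similar_subset_of_invariant[where X=Y and Y=X and I=I and S=S and lam=lam])
      (use assms in \<open>blast intro: compact_imp_closed\<close>)+
qed

definition homothety :: "real \<Rightarrow> 'a \<Rightarrow> 'a \<Rightarrow> 'a::real_vector"
  where "homothety r c x = r *\<^sub>R x + (1 - r) *\<^sub>R c"

lemma dist_homothety:
  fixes c x y :: "'a::real_normed_vector"
  shows "dist (homothety r c x) (homothety r c y) = \<bar>r\<bar> * dist x y"
proof -
  have "homothety r c x - homothety r c y = r *\<^sub>R (x - y)"
    by (simp add: homothety_def algebra_simps)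
  then show ?thesis by (simp add: dist_norm)
qed

lemma homothety_image_subset_convex:
  assumes "convex K" "c \<in> K" "0 \<le> r" "r \<le> 1"
  shows "homothety r c ` K \<subseteq> K"
  using assms by (auto simp: homothety_def intro: convexD)

lemma convex_combination_in_homothety_image:
  fixes T :: "'a::real_vector set"
  assumes T: "finite T" "\<forall>q\<in>T. 0 \<le> u q" "sum u T = 1"
    and c: "c \<in> T" "0 < r" "1 - r \<le> u c"
  shows "(\<Sum>q\<in>T. u q *\<^sub>R q) \<in> homothety r c ` (convex hull T)"
proof
  define v where "v q = (u q - (if q = c then 1 - r else 0)) / r" for q
  have "sum v T = (sum u T - (1 - r)) / r"
    unfolding v_def sum_divide_distrib[symmetric] sum_subtractf using T(1) c(1) by simp
  then have "sum v T = 1" using T(3) c(2) by simp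
  moreover have "\<forall>q\<in>T. 0 \<le> v q" using T(2) c by (simp add: v_def)
  ultimately show "(\<Sum>q\<in>T. v q *\<^sub>R q) \<in> convex hull T"
    using T(1) by (auto simp: convex_hull_finite)
  have "r * v q = u q - (if q = c then 1 - r else 0)" for q
    using c(2) by (simp add: v_def)
  then have "r *\<^sub>R (\<Sum>q\<in>T. v q *\<^sub>R q) = (\<Sum>q\<in>T. (u q - (if q = c then 1 - r else 0)) *\<^sub>R q)"
    by (simp add: scaleR_sum_right)
  also have "\<dots> = (\<Sum>q\<in>T. u q *\<^sub>R q) - (1 - r) *\<^sub>R c"
    using T(1) c(1) by (simp add: scaleR_left_diff_distrib sum_subtractf if_distrib[of "\<lambda>a. a *\<^sub>R _"]
          sum.delta' cong: if_cong)
  finally show "(\<Sum>q\<in>T. u q *\<^sub>R q) = homothety r c (\<Sum>q\<in>T. v q *\<^sub>R q)"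
    by (simp add: homothety_def)
qed

lemma sum_le_sum_imp_ex_le:
  fixes f g :: "'i \<Rightarrow> 'b::{ordered_cancel_comm_monoid_add, linorder}"
  assumes "finite A" "A \<noteq> {}" "sum f A \<le> sum g A"
  obtains j where "j \<in> A" "f j \<le> g j"
proof -
  have "\<not> sum g A < sum f A" using assms(3) by simp
  then obtain j where "j \<in> A" "\<not> g j < f j"
    using sum_strict_mono[OF assms(1,2), of g f] by blast
  then show thesis using that by (simp add: not_less)
qed

lemma convex_hull_caratheodory_exact:
  fixes F :: "'a::euclidean_space set"
  assumes "finite F" "DIM('a) < card F" "x \<in> convex hull F"
  obtains T where "T \<subseteq> F" "card T = DIM('a) + 1" "x \<in> convex hull T"
proof -
  obtain S where S: "S \<subseteq> F" "card S \<le> DIM('a) + 1" "x \<in> convex hull S"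
    using assms(3) caratheodory[of F] by auto
  obtain T where "S \<subseteq> T" "T \<subseteq> F" "card T = DIM('a) + 1"
    using exists_subset_between[of S "DIM('a) + 1" F] S assms(1,2) by auto
  then show thesis using that S(3) hull_mono by blast
qed

lemma convex_hull_subset_Union_homothety:
  fixes p :: "'i \<Rightarrow> 'a::euclidean_space"
  assumes I: "finite I" "inj_on p I" "DIM('a) < card I"
    and lam: "\<And>i. i \<in> I \<Longrightarrow> 0 < lam i"
    and lam_sum: "\<And>A. A \<subseteq> I \<Longrightarrow> card A = DIM('a) + 1 \<Longrightarrow> real DIM('a) \<le> sum lam A"
  shows "convex hull (p ` I) \<subseteq> (\<Union>i\<in>I. homothety (lam i) (p i) ` (convex hull (p ` I)))"
proof
  fix x assume "x \<in> convex hull (p ` I)"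
  moreover have "DIM('a) < card (p ` I)" using I card_image[OF I(2)] by simp
  ultimately obtain T where T: "T \<subseteq> p ` I" "card T = DIM('a) + 1" "x \<in> convex hull T"
    using convex_hull_caratheodory_exact[OF finite_imageI[OF I(1)]] by blast
  then obtain A where A: "A \<subseteq> I" "T = p ` A"
    by (auto simp: subset_image_iff)
  have inj_A: "inj_on p A" using I(2) A(1) by (rule inj_on_subset)
  have fin_A: "finite A" using A(1) I(1) by (rule finite_subset)
  have card_A: "card A = DIM('a) + 1" using T(2) A(2) card_image[OF inj_A] by simp
  have fin_T: "finite T" using A(2) fin_A by simp
  obtain u where u: "\<forall>q\<in>T. 0 \<le> u q" "sum u T = 1" "(\<Sum>q\<in>T. u q *\<^sub>R q) = x"
    using T(3) unfolding convex_hull_finite[OF fin_T] by blast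
  have "(\<Sum>i\<in>A. 1 - lam i) \<le> (\<Sum>i\<in>A. u (p i))"
    using lam_sum[OF A(1) card_A] u(2) A(2) sum.reindex[OF inj_A, of u]
    by (simp add: sum_subtractf card_A)
  moreover have "A \<noteq> {}" using card_A by auto
  ultimately obtain j where j: "j \<in> A" "1 - lam j \<le> u (p j)"
    using sum_le_sum_imp_ex_le[OF fin_A] by blast
  have "p j \<in> T" "0 < lam j" using j(1) A lam by auto
  then have "x \<in> homothety (lam j) (p j) ` (convex hull T)"
    using convex_combination_in_homothety_image[OF fin_T u(1,2) _ _ j(2)] u(3) by simp
  moreover have "convex hull T \<subseteq> convex hull (p ` I)" using T(1) by (rule hull_mono)
  ultimately show "x \<in> (\<Union>i\<in>I. homothety (lam i) (p i) ` (convex hull (p ` I)))"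
    using j(1) A(1) by blast
qed

lemma card_gt_DIM_if_not_in_hyperplane:
  fixes F :: "'a::euclidean_space set"
  assumes "finite F" "\<not> (\<exists>H. affine H \<and> aff_dim H = int DIM('a) - 1 \<and> F \<subseteq> H)"
  shows "DIM('a) < card F"
proof (rule ccontr)
  assume "\<not> DIM('a) < card F"
  then have "aff_dim (convex hull F) < DIM('a)"
    using aff_dim_le_card[OF assms(1)] by (simp add: aff_dim_convex_hull)
  then have "interior (convex hull F) = {}"
    using aff_dim_nonempty_interior[of "convex hull F"] by auto
  then obtain a b where "a \<noteq> 0" "convex hull F \<subseteq> {x. a \<bullet> x = b}"
    using empty_interior_subset_hyperplane[OF convex_convex_hull] by blast
  then have "affine {x. a \<bullet> x = b}" "aff_dim {x. a \<bullet> x = b} = int DIM('a) - 1"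
    "F \<subseteq> {x. a \<bullet> x = b}"
    using affine_hyperplane aff_dim_hyperplane hull_subset[of F convex] by auto
  then show False using assms(2) by blast
qed

theorem lemma2p4:
  fixes p :: "nat \<Rightarrow> real ^ 'd" and lam :: "nat \<Rightarrow> real" and n :: nat
  defines "F \<equiv> p ` {0..n}"
  defines "S \<equiv> (\<lambda>i x. lam i *\<^sub>R x + (1 - lam i) *\<^sub>R p i)"
  assumes distinct: "inj_on p {0..n}"
    and spanning: "\<not> (\<exists>A :: (real ^ 'd) set. affine A \<and> aff_dim A = int CARD('d) - 1 \<and> F \<subseteq> A)"
    and lam_range: "\<forall>i\<in>{0..n}. 0 < lam i \<and> lam i < 1"
    and min_cond: "\<forall>A \<subseteq> {0..n}. card A = CARD('d) + 1 \<longrightarrow> (\<Sum>i\<in>A. lam i) \<ge> real CARD('d)"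
  shows "convex hull F = (\<Union>i\<in>{0..n}. S i ` (convex hull F))
    \<and> (\<forall>X. X \<noteq> {} \<and> compact X \<and> X = (\<Union>i\<in>{0..n}. S i ` X) \<longrightarrow> X = convex hull F)"
proof -
  have S_eq: "S = (\<lambda>i. homothety (lam i) (p i))"
    by (simp add: S_def homothety_def fun_eq_iff)
  have "CARD('d) < card {0..n}"
    using card_gt_DIM_if_not_in_hyperplane[of F] spanning card_image[OF distinct] by (simp add: F_def)
  then have "convex hull F \<subseteq> (\<Union>i\<in>{0..n}. S i ` (convex hull F))"
    unfolding S_eq F_def
    by (intro convex_hull_subset_Union_homothety[OF _ distinct]) (use lam_range min_cond in auto)
  moreover have "S i ` (convex hull F) \<subseteq> convex hull F" if "i \<in> {0..n}" for i
    unfolding S_eq using lam_range that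
    by (intro homothety_image_subset_convex) (auto simp: F_def hull_inc less_imp_le)
  ultimately have self_similar: "convex hull F = (\<Union>i\<in>{0..n}. S i ` (convex hull F))"
    by blast
  have hull: "compact (convex hull F)" "convex hull F \<noteq> {}"
    by (simp_all add: F_def compact_convex_hull finite_imp_compact)
  have contraction: "dist (S i x) (S i y) \<le> lam i * dist x y" if "i \<in> {0..n}" for i x y
    using lam_range that by (auto simp: S_eq dist_homothety abs_of_pos)
  have lam: "0 \<le> lam i \<and> lam i < 1" if "i \<in> {0..n}" for i
    using lam_range[rule_format, OF that] by simp
  show ?thesis
  proof (intro conjI allI impI)
    fix X assume X: "X \<noteq> {} \<and> compact X \<and> X = (\<Union>i\<in>{0..n}. S i ` X)"
    show "X = convex hull F"
      by (rule self_similar_set_unique[OF _ _ _ hull self_similar contraction lam]) (use X in blast)+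
  qed (rule self_similar)
qed

end
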